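(* Let $x_{k-1},x_k,x_{k+1}$ be consecutive Newton–Anderson iterates with $x_k,x_{k-1}\in B_{\hat r}(x^* )\setminus S$ under Assumption (A), and let $r^e_{k+1}$ and a minimizer $E_{k+1}$ be as in the context. Suppose $r^e_{k+1}\neq1$ and that there is a constant $C>0$ (depending on $f$) with $$\|E_{k+1}\|>C\max\{|1-\gamma_{k+1}|\,\|e_k\|,\;|\gamma_{k+1}|\,\|e_{k-1}\|\}.$$ Then $P_Ne_{k+1}\ne0$ and $\sigma_{k+1}:=\|P_Re_{k+1}\|/\|P_Ne_{k+1}\|$ satisfies $\sigma_{k+1}\le K\max\{\|e_k\|,\|e_{k-1}\|\}$ for a constant $K$ depending only on $f$, $C$ and $r^e_{k+1}$; that is, $\sigma_{k+1}=\mathcal{O}(\max\{\|e_k\|,\|e_{k-1}\|\})$.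
   Context: $f:\mathbb{R}^n\to\mathbb{R}^n$ is $C^3$ with $f(x^* )=0$; norms are Euclidean; $N=\operatorname{null}f'(x^* )\neq\{0\}$, $R=\operatorname{range}f'(x^* )$, $\mathbb{R}^n=N\oplus R$, $P_N,P_R$ orthogonal projections; $S=\{x:\det f'(x)=0\}$. Iterates: $e_k=x_k-x^*$, $w_{k+1}=-f'(x_k)^{-1}f(x_k)$; Newton–Anderson: $x_1=x_0+w_1$, and for $k\ge1$, $\gamma_{k+1}=(w_{k+1}-w_k)^Tw_{k+1}/\|w_{k+1}-w_k\|^2$, $x_{k+1}=x_k+w_{k+1}-\gamma_{k+1}(x_k-x_{k-1}+w_{k+1}-w_k)$. $\hat D(x):N\to N$, $v\mapsto P_Nf''(x^* )(x-x^*,v)$. Assumption (A): for $x\in B_{\hat r}(x^* )\setminus S$, $\hat D(x)$ is invertible on $N$, and $f'(x)^{-1}=\hat D(x)^{-1}P_N+\mathcal{O}(1)$ for $\|x-x^*\|<\hat r$. $T_kv=\tfrac12\hat D(x_k)^{-1}P_Nf''(x_k)(e_k,v)$. Set $q:=e_{k+1}-\tfrac12\big((1-\gamma_{k+1})P_Ne_k+\gamma_{k+1}P_Ne_{k-1}\big)-\big((1-\gamma_{k+1})T_kP_Re_k+\gamma_{k+1}T_{k-1}P_Re_{k-1}\big)$, and $a_1=\tfrac{1-\gamma_{k+1}}{2}P_Ne_k$, $a_2=\tfrac{\gamma_{k+1}}{2}P_Ne_{k-1}$, $a_3=(1-\gamma_{k+1})T_kP_Re_k$, $a_4=\gamma_{k+1}T_{k-1}P_Re_{k-1}$,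 $a_5=P_Nq$ (so $P_Ne_{k+1}=\sum a_i$). $S^e_{k+1}$ is the set of sums $\sum_{i\in I}a_i$ over nonempty proper subsets $I\subsetneq\{1,\dots,5\}$; $r^e_{k+1}=\min\{\|P_Ne_{k+1}-E\|/\|E\|:E\in S^e_{k+1},E\ne0\}$, and $E_{k+1}\in S^e_{k+1}$ attains this minimum. *)

theory Defs
  imports "HOL-Analysis.Analysis"
begin

type_synonym 'n vec = "real^'n"

definition C3 :: "('n::finite vec \<Rightarrow> 'n vec) \<Rightarrow> ('n vec \<Rightarrow> 'n vec \<Rightarrow>\<^sub>L 'n vec)
   \<Rightarrow> ('n vec \<Rightarrow> 'n vec \<Rightarrow>\<^sub>L 'n vec \<Rightarrow>\<^sub>L 'n vec)
   \<Rightarrow> ('n vec \<Rightarrow> 'n vec \<Rightarrow>\<^sub>L 'n vec \<Rightarrow>\<^sub>L 'n vec \<Rightarrow>\<^sub>L 'n vec) \<Rightarrow> bool" where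
  "C3 f Df D2f D3f \<longleftrightarrow>
     (\<forall>x. (f has_derivative blinfun_apply (Df x)) (at x)) \<and>
     (\<forall>x. (Df has_derivative blinfun_apply (D2f x)) (at x)) \<and>
     (\<forall>x. (D2f has_derivative blinfun_apply (D3f x)) (at x)) \<and>
     continuous_on UNIV D3f"

definition jac :: "('n::finite vec \<Rightarrow> 'n vec \<Rightarrow>\<^sub>L 'n vec) \<Rightarrow> 'n vec \<Rightarrow> real^'n^'n" where
  "jac Df x = matrix (blinfun_apply (Df x))"

definition sing_set :: "('n::finite vec \<Rightarrow> 'n vec \<Rightarrow>\<^sub>L 'n vec) \<Rightarrow> 'n vec set" where
  "sing_set Df = {x. det (jac Df x) = 0}"

definition newton_step :: "('n::finite vec \<Rightarrow> 'n vec) \<Rightarrow> ('n vec \<Rightarrow> 'n vec \<Rightarrow>\<^sub>L 'n vec)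
   \<Rightarrow> 'n vec \<Rightarrow> 'n vec" where
  "newton_step f Df x = - (matrix_inv (jac Df x) *v f x)"

definition NA_w :: "('n::finite vec \<Rightarrow> 'n vec) \<Rightarrow> ('n vec \<Rightarrow> 'n vec \<Rightarrow>\<^sub>L 'n vec)
   \<Rightarrow> (nat \<Rightarrow> 'n vec) \<Rightarrow> nat \<Rightarrow> 'n vec" where
  "NA_w f Df x j = newton_step f Df (x (j - 1))"

definition NA_gamma :: "('n::finite vec \<Rightarrow> 'n vec) \<Rightarrow> ('n vec \<Rightarrow> 'n vec \<Rightarrow>\<^sub>L 'n vec)
   \<Rightarrow> (nat \<Rightarrow> 'n vec) \<Rightarrow> nat \<Rightarrow> real" where
  "NA_gamma f Df x k =
     ((NA_w f Df x (k+1) - NA_w f Df x k) \<bullet> NA_w f Df x (k+1)) /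
       (norm (NA_w f Df x (k+1) - NA_w f Df x k))\<^sup>2"

text \<open>x is a Newton--Anderson sequence (depth 1)\<close>
definition NA_seq :: "('n::finite vec \<Rightarrow> 'n vec) \<Rightarrow> ('n vec \<Rightarrow> 'n vec \<Rightarrow>\<^sub>L 'n vec)
   \<Rightarrow> (nat \<Rightarrow> 'n vec) \<Rightarrow> bool" where
  "NA_seq f Df x \<longleftrightarrow>
     x 1 = x 0 + NA_w f Df x 1 \<and>
     (\<forall>k\<ge>1. x (k+1) = x k + NA_w f Df x (k+1)
        - NA_gamma f Df x k *\<^sub>R (x k - x (k-1) + NA_w f Df x (k+1) - NA_w f Df x k))"

definition nullsp :: "('n::finite vec \<Rightarrow> 'n vec \<Rightarrow>\<^sub>L 'n vec) \<Rightarrow> 'n vec \<Rightarrow> 'n vec set" where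
  "nullsp Df xs = {v. blinfun_apply (Df xs) v = 0}"

definition rangesp :: "('n::finite vec \<Rightarrow> 'n vec \<Rightarrow>\<^sub>L 'n vec) \<Rightarrow> 'n vec \<Rightarrow> 'n vec set" where
  "rangesp Df xs = range (blinfun_apply (Df xs))"

definition is_orth_proj :: "('n::finite vec \<Rightarrow> 'n vec) \<Rightarrow> 'n vec set \<Rightarrow> bool" where
  "is_orth_proj P V \<longleftrightarrow> (\<forall>x. P x \<in> V \<and> (\<forall>v\<in>V. (x - P x) \<bullet> v = 0))"

definition Dhat :: "('n::finite vec \<Rightarrow> 'n vec \<Rightarrow>\<^sub>L 'n vec \<Rightarrow>\<^sub>L 'n vec) \<Rightarrow> 'n vec
   \<Rightarrow> ('n vec \<Rightarrow> 'n vec) \<Rightarrow> 'n vec \<Rightarrow> 'n vec \<Rightarrow> 'n vec" where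
  "Dhat D2f xs PN x v = PN (blinfun_apply (blinfun_apply (D2f xs) (x - xs)) v)"

definition assumptionA :: "('n::finite vec \<Rightarrow> 'n vec \<Rightarrow>\<^sub>L 'n vec)
   \<Rightarrow> ('n vec \<Rightarrow> 'n vec \<Rightarrow>\<^sub>L 'n vec \<Rightarrow>\<^sub>L 'n vec) \<Rightarrow> 'n vec \<Rightarrow> ('n vec \<Rightarrow> 'n vec) \<Rightarrow> real \<Rightarrow> bool" where
  "assumptionA Df D2f xs PN rhat \<longleftrightarrow>
     (\<forall>x\<in>ball xs rhat - sing_set Df. bij_betw (Dhat D2f xs PN x) (nullsp Df xs) (nullsp Df xs)) \<and>
     (\<exists>M. \<forall>x\<in>ball xs rhat - sing_set Df. \<forall>v.
        norm (matrix_inv (jac Df x) *v v - inv_into (nullsp Df xs) (Dhat D2f xs PN x) (PN v)) \<le> M * norm v)"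

definition NA_T :: "('n::finite vec \<Rightarrow> 'n vec \<Rightarrow>\<^sub>L 'n vec)
   \<Rightarrow> ('n vec \<Rightarrow> 'n vec \<Rightarrow>\<^sub>L 'n vec \<Rightarrow>\<^sub>L 'n vec) \<Rightarrow> 'n vec \<Rightarrow> ('n vec \<Rightarrow> 'n vec)
   \<Rightarrow> (nat \<Rightarrow> 'n vec) \<Rightarrow> nat \<Rightarrow> 'n vec \<Rightarrow> 'n vec" where
  "NA_T Df D2f xs PN x j v =
     (1/2) *\<^sub>R inv_into (nullsp Df xs) (Dhat D2f xs PN (x j))
        (PN (blinfun_apply (blinfun_apply (D2f (x j)) (x j - xs)) v))"

text \<open>q and the terms a_1..a_5 (for step k+1); a i = 0 outside 1..5 (not used)\<close>
definition NA_q :: "('n::finite vec \<Rightarrow> 'n vec) \<Rightarrow> ('n vec \<Rightarrow> 'n vec \<Rightarrow>\<^sub>L 'n vec)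
   \<Rightarrow> ('n vec \<Rightarrow> 'n vec \<Rightarrow>\<^sub>L 'n vec \<Rightarrow>\<^sub>L 'n vec) \<Rightarrow> 'n vec \<Rightarrow> ('n vec \<Rightarrow> 'n vec) \<Rightarrow> ('n vec \<Rightarrow> 'n vec)
   \<Rightarrow> (nat \<Rightarrow> 'n vec) \<Rightarrow> nat \<Rightarrow> 'n vec" where
  "NA_q f Df D2f xs PN PR x k =
     (let g = NA_gamma f Df x k; e = (\<lambda>j. x j - xs) in
      e (k+1) - (1/2) *\<^sub>R ((1 - g) *\<^sub>R PN (e k) + g *\<^sub>R PN (e (k-1)))
        - ((1 - g) *\<^sub>R NA_T Df D2f xs PN x k (PR (e k))
           + g *\<^sub>R NA_T Df D2f xs PN x (k-1) (PR (e (k-1)))))"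

definition NA_a :: "('n::finite vec \<Rightarrow> 'n vec) \<Rightarrow> ('n vec \<Rightarrow> 'n vec \<Rightarrow>\<^sub>L 'n vec)
   \<Rightarrow> ('n vec \<Rightarrow> 'n vec \<Rightarrow>\<^sub>L 'n vec \<Rightarrow>\<^sub>L 'n vec) \<Rightarrow> 'n vec \<Rightarrow> ('n vec \<Rightarrow> 'n vec) \<Rightarrow> ('n vec \<Rightarrow> 'n vec)
   \<Rightarrow> (nat \<Rightarrow> 'n vec) \<Rightarrow> nat \<Rightarrow> nat \<Rightarrow> 'n vec" where
  "NA_a f Df D2f xs PN PR x k i =
     (let g = NA_gamma f Df x k; e = (\<lambda>j. x j - xs) in
      if i = 1 then ((1 - g) / 2) *\<^sub>R PN (e k)
      else if i = 2 then (g / 2) *\<^sub>R PN (e (k-1))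
      else if i = 3 then (1 - g) *\<^sub>R NA_T Df D2f xs PN x k (PR (e k))
      else if i = 4 then g *\<^sub>R NA_T Df D2f xs PN x (k-1) (PR (e (k-1)))
      else if i = 5 then PN (NA_q f Df D2f xs PN PR x k)
      else 0)"

definition NA_Se :: "('n::finite vec \<Rightarrow> 'n vec) \<Rightarrow> ('n vec \<Rightarrow> 'n vec \<Rightarrow>\<^sub>L 'n vec)
   \<Rightarrow> ('n vec \<Rightarrow> 'n vec \<Rightarrow>\<^sub>L 'n vec \<Rightarrow>\<^sub>L 'n vec) \<Rightarrow> 'n vec \<Rightarrow> ('n vec \<Rightarrow> 'n vec) \<Rightarrow> ('n vec \<Rightarrow> 'n vec)
   \<Rightarrow> (nat \<Rightarrow> 'n vec) \<Rightarrow> nat \<Rightarrow> 'n vec set" where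
  "NA_Se f Df D2f xs PN PR x k =
     {(\<Sum>i\<in>I. NA_a f Df D2f xs PN PR x k i) | I. I \<noteq> {} \<and> I \<subset> {1..5::nat}}"

definition NA_ratio :: "'n::finite vec \<Rightarrow> ('n vec \<Rightarrow> 'n vec) \<Rightarrow> (nat \<Rightarrow> 'n vec) \<Rightarrow> nat \<Rightarrow> 'n vec \<Rightarrow> real" where
  "NA_ratio xs PN x k E = norm (PN (x (k+1) - xs) - E) / norm E"

end

theory Submission
  imports Defs
begin

text \<open>
  By the Newton--Anderson update, \<open>e\<^sub>k\<^sub>+\<^sub>1 = (1 - \<gamma>)(e\<^sub>k + w\<^sub>k\<^sub>+\<^sub>1) + \<gamma>(e\<^sub>k\<^sub>-\<^sub>1 + w\<^sub>k)\<close>, and each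
  bracket is the error after a Newton step. Assumption (A) together with a second-order Taylor
  bound places such an error within \<open>O(\<parallel>e\<parallel>\<^sup>2)\<close> of \<open>N\<close>, so \<open>e\<^sub>k\<^sub>+\<^sub>1 = n + b\<close> with \<open>n \<in> N\<close> and
  \<open>\<parallel>b\<parallel> = O(m\<^sub>1 m\<^sub>2)\<close>, where \<open>m\<^sub>1 = max (\<bar>1 - \<gamma>\<bar> \<parallel>e\<^sub>k\<parallel>) (\<bar>\<gamma>\<bar> \<parallel>e\<^sub>k\<^sub>-\<^sub>1\<parallel>)\<close> and
  \<open>m\<^sub>2 = max \<parallel>e\<^sub>k\<parallel> \<parallel>e\<^sub>k\<^sub>-\<^sub>1\<parallel>\<close>. Since \<open>\<parallel>P\<^sub>N e\<^sub>k\<^sub>+\<^sub>1 - E\<parallel> = \<rho> \<parallel>E\<parallel>\<close> with \<open>\<rho> \<noteq> 1\<close>, the reverse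
  triangle inequality gives \<open>\<parallel>P\<^sub>N e\<^sub>k\<^sub>+\<^sub>1\<parallel> \<ge> \<bar>1 - \<rho>\<bar> \<parallel>E\<parallel> > \<bar>1 - \<rho>\<bar> C m\<^sub>1\<close>, so
  \<open>\<parallel>b\<parallel> / \<parallel>P\<^sub>N e\<^sub>k\<^sub>+\<^sub>1\<parallel> = O(m\<^sub>2)\<close>. It remains to see that \<open>P\<^sub>R n\<close> is \<open>O(m\<^sub>2 \<parallel>n\<parallel>)\<close>: it vanishes
  when \<open>R \<bottom> N\<close>, and otherwise (A) keeps every admissible iterate a fixed distance away from
  \<open>x\<^sup>*\<close>, so that the trivial bound \<open>\<parallel>P\<^sub>R n\<parallel> \<le> \<parallel>n\<parallel>\<close> already suffices.
\<close>

lemma subspace_nullsp: "subspace (nullsp Df xs)"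
  unfolding nullsp_def
  by (rule linear_subspace_kernel) (simp add: blinfun.bounded_linear_right bounded_linear.linear)

lemma subspace_rangesp: "subspace (rangesp Df xs)"
  unfolding rangesp_def
  by (rule linear_subspace_image) (simp_all add: blinfun.bounded_linear_right bounded_linear.linear)

lemma is_orth_proj_in: "is_orth_proj P V \<Longrightarrow> P x \<in> V"
  by (simp add: is_orth_proj_def)

lemma is_orth_proj_unique:
  assumes P: "is_orth_proj P V" and V: "subspace V"
    and p: "p \<in> V" and orth: "\<forall>v\<in>V. (x - p) \<bullet> v = 0"
  shows "P x = p"
proof -
  have d: "P x - p \<in> V" using V is_orth_proj_in[OF P] p by (rule subspace_diff)
  have "(P x - p) \<bullet> (P x - p) = (x - p) \<bullet> (P x - p) - (x - P x) \<bullet> (P x - p)"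
    by (simp add: algebra_simps inner_diff_left inner_diff_right)
  also have "\<dots> = 0" using orth P d by (simp add: is_orth_proj_def)
  finally show ?thesis by simp
qed

lemma is_orth_proj_id: "is_orth_proj P V \<Longrightarrow> subspace V \<Longrightarrow> v \<in> V \<Longrightarrow> P v = v"
  by (rule is_orth_proj_unique[of P V]) auto

lemma is_orth_proj_linear:
  assumes P: "is_orth_proj P V" and V: "subspace V"
  shows "linear P"
proof
  have orth: "(x - P x) \<bullet> v = 0" if "v \<in> V" for x v
    using P that by (simp add: is_orth_proj_def)
  show "P (x + y) = P x + P y" for x y
  proof (intro is_orth_proj_unique[OF P V] subspace_add[OF V] is_orth_proj_in[OF P] ballI)
    fix v assume "v \<in> V"
    then show "(x + y - (P x + P y)) \<bullet> v = 0"
      using orth[of v x] orth[of v y] by (simp add: inner_diff_left inner_add_left)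
  qed
  show "P (c *\<^sub>R x) = c *\<^sub>R P x" for c x
  proof (intro is_orth_proj_unique[OF P V] subspace_scale[OF V] is_orth_proj_in[OF P] ballI)
    fix v assume "v \<in> V"
    then show "(c *\<^sub>R x - c *\<^sub>R P x) \<bullet> v = 0"
      using orth[of v x] by (simp add: inner_diff_left)
  qed
qed

lemma is_orth_proj_norm_le:
  assumes "is_orth_proj P V"
  shows "norm (P x) \<le> norm x"
proof -
  have "orthogonal (x - P x) (P x)"
    using assms by (simp add: is_orth_proj_def orthogonal_def)
  then have "norm x ^ 2 = norm (x - P x) ^ 2 + norm (P x) ^ 2"
    by (metis diff_add_cancel norm_add_Pythagorean)
  then show ?thesis
    by (simp add: power2_le_imp_le)
qed

lemma is_orth_proj_annihilate_sym:
  assumes P: "is_orth_proj P V" and Q: "is_orth_proj Q W"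
    and kill: "\<forall>w\<in>W. P w = 0" and v: "v \<in> V"
  shows "Q v = 0"
proof -
  have "Q v \<bullet> v = 0"
    using P kill is_orth_proj_in[OF Q] v unfolding is_orth_proj_def by (metis diff_zero)
  moreover have "Q v \<bullet> (v - Q v) = 0"
    using Q is_orth_proj_in[OF Q] by (simp add: is_orth_proj_def inner_commute)
  moreover have "Q v \<bullet> Q v = Q v \<bullet> v - Q v \<bullet> (v - Q v)"
    by (simp add: inner_diff_right)
  ultimately show ?thesis by simp
qed

lemma derivative_lipschitz_on_convex:
  fixes Df :: "'a::real_normed_vector \<Rightarrow> 'a \<Rightarrow>\<^sub>L 'b::real_normed_vector"
  assumes "convex S"
    and "\<And>x. x \<in> S \<Longrightarrow> (Df has_derivative blinfun_apply (D2f x)) (at x within S)"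
    and "\<And>x. x \<in> S \<Longrightarrow> norm (D2f x) \<le> L"
    and "y \<in> S" "z \<in> S"
  shows "norm (Df y - Df z) \<le> L * norm (y - z)"
  using assms by (intro differentiable_bound[of S]) (auto simp flip: norm_blinfun.rep_eq)

lemma linearization_error_at_zero:
  fixes f :: "'a::real_normed_vector \<Rightarrow> 'b::real_normed_vector"
  assumes S: "convex S"
    and f_deriv: "\<And>x. x \<in> S \<Longrightarrow> (f has_derivative blinfun_apply (Df x)) (at x within S)"
    and Df_lip: "\<And>y z. y \<in> S \<Longrightarrow> z \<in> S \<Longrightarrow> norm (Df y - Df z) \<le> L * norm (y - z)"
    and L: "L \<ge> 0" and y: "y \<in> S" and xs: "xs \<in> S" and root: "f xs = 0"
  shows "norm (Df y (y - xs) - f y) \<le> L * norm (y - xs) ^ 2"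
proof -
  let ?seg = "closed_segment y xs"
  have seg: "?seg \<subseteq> S" using S y xs by (simp add: closed_segment_subset)
  have "norm (f xs - f y - Df y (xs - y)) \<le> norm (xs - y) * (L * norm (xs - y))"
  proof (rule differentiable_bound_linearization[of y xs ?seg])
    show "y + t *\<^sub>R (xs - y) \<in> ?seg" if "t \<in> {0..1}" for t
      using that by (auto simp: closed_segment_def algebra_simps intro!: exI[of _ t])
    show "(f has_derivative blinfun_apply (Df x)) (at x within ?seg)" if "x \<in> ?seg" for x
      using that seg f_deriv has_derivative_subset by blast
    show "onorm (blinfun_apply (Df x) - blinfun_apply (Df y)) \<le> L * norm (xs - y)"
      if x: "x \<in> ?seg" for x
    proof -
      have "onorm (blinfun_apply (Df x) - blinfun_apply (Df y)) = norm (Df x - Df y)"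
        by (simp add: norm_blinfun.rep_eq minus_blinfun.rep_eq fun_diff_def)
      also have "\<dots> \<le> L * norm (x - y)" using x seg y by (intro Df_lip) auto
      also have "\<dots> \<le> L * norm (xs - y)"
        using segment_bound1[OF x] L by (rule mult_left_mono)
      finally show ?thesis .
    qed
  qed simp
  moreover have "f xs - f y - Df y (xs - y) = Df y (y - xs) - f y"
    using root by (simp add: blinfun.diff_right algebra_simps)
  ultimately show ?thesis
    by (simp add: norm_minus_commute power2_eq_square mult_ac)
qed

lemma jac_mult: "jac Df x *v v = Df x v"
  unfolding jac_def by (simp add: blinfun.bounded_linear_right bounded_linear.linear matrix_works)

lemma matrix_inv_jac_cancel:
  assumes "x \<notin> sing_set Df"
  shows "matrix_inv (jac Df x) *v Df x v = v"
proof -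
  have "invertible (jac Df x)" using assms by (simp add: sing_set_def invertible_det_nz)
  then have "\<exists>A'. jac Df x ** A' = mat 1 \<and> A' ** jac Df x = mat 1" by (simp add: invertible_def)
  then have "matrix_inv (jac Df x) ** jac Df x = mat 1"
    unfolding matrix_inv_def by (rule someI2_ex) simp
  then show ?thesis
    by (metis jac_mult matrix_vector_mul_assoc matrix_vector_mul_lid)
qed

lemma newton_error_eq:
  assumes "x \<notin> sing_set Df"
  shows "x - xs + newton_step f Df x = matrix_inv (jac Df x) *v (Df x (x - xs) - f x)"
  by (simp add: newton_step_def matrix_vector_mult_diff_distrib matrix_inv_jac_cancel[OF assms])

lemma NA_seq_error:
  assumes "NA_seq f Df x" and "k \<ge> 1"
  shows "x (k+1) - xs =
    (1 - NA_gamma f Df x k) *\<^sub>R (x k - xs + newton_step f Df (x k))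
      + NA_gamma f Df x k *\<^sub>R (x (k-1) - xs + newton_step f Df (x (k-1)))"
proof -
  let ?g = "NA_gamma f Df x k" and ?w = "newton_step f Df"
  have "x (k+1) = x k + ?w (x k) - ?g *\<^sub>R (x k - x (k-1) + ?w (x k) - ?w (x (k-1)))"
    using assms by (simp add: NA_seq_def NA_w_def)
  then show ?thesis by (simp add: algebra_simps)
qed

lemma norm_affine_comb_diff_le:
  fixes u1 u2 n1 n2 :: "'a::real_normed_vector"
  assumes "norm (u1 - n1) \<le> c * t1 ^ 2" "norm (u2 - n2) \<le> c * t2 ^ 2"
    and "c \<ge> 0" "t1 \<ge> 0" "t2 \<ge> 0"
  shows "norm (((1 - g) *\<^sub>R u1 + g *\<^sub>R u2) - ((1 - g) *\<^sub>R n1 + g *\<^sub>R n2))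
    \<le> 2 * c * max (\<bar>1 - g\<bar> * t1) (\<bar>g\<bar> * t2) * max t1 t2"
proof -
  let ?m1 = "max (\<bar>1 - g\<bar> * t1) (\<bar>g\<bar> * t2)" and ?m2 = "max t1 t2"
  have "((1 - g) *\<^sub>R u1 + g *\<^sub>R u2) - ((1 - g) *\<^sub>R n1 + g *\<^sub>R n2)
      = (1 - g) *\<^sub>R (u1 - n1) + g *\<^sub>R (u2 - n2)"
    by (simp add: algebra_simps)
  then have "norm (((1 - g) *\<^sub>R u1 + g *\<^sub>R u2) - ((1 - g) *\<^sub>R n1 + g *\<^sub>R n2))
      \<le> \<bar>1 - g\<bar> * norm (u1 - n1) + \<bar>g\<bar> * norm (u2 - n2)"
    using norm_triangle_ineq[of "(1 - g) *\<^sub>R (u1 - n1)" "g *\<^sub>R (u2 - n2)"] by simp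
  also have "\<dots> \<le> \<bar>1 - g\<bar> * (c * t1 ^ 2) + \<bar>g\<bar> * (c * t2 ^ 2)"
    using assms(1,2) by (intro add_mono mult_left_mono) auto
  also have "\<dots> = c * ((\<bar>1 - g\<bar> * t1) * t1 + (\<bar>g\<bar> * t2) * t2)"
    by (simp add: algebra_simps power2_eq_square)
  also have "\<dots> \<le> c * (?m1 * ?m2 + ?m1 * ?m2)"
    using assms(3-5) by (intro mult_left_mono add_mono mult_mono) (auto simp: le_max_iff_disj)
  finally show ?thesis by (simp add: mult_ac)
qed

lemma abs_one_minus_ratio_le:
  fixes p e :: "'a::real_normed_vector"
  assumes "norm (p - e) = \<rho> * norm e"
  shows "\<bar>1 - \<rho>\<bar> * norm e \<le> norm p"
proof -
  have "norm e \<le> norm p + norm (p - e)"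
    using norm_triangle_sub[of e p] by (simp add: norm_minus_commute)
  moreover have "norm (p - e) \<le> norm p + norm e" by (rule norm_triangle_ineq4)
  ultimately show ?thesis using assms by (simp add: abs_if algebra_simps)
qed

lemma NA_ratio_lower_bound:
  assumes "NA_ratio xs PN x k E = \<rho>" "E \<noteq> 0"
  shows "\<bar>1 - \<rho>\<bar> * norm E \<le> norm (PN (x (k+1) - xs))"
  using assms by (intro abs_one_minus_ratio_le) (simp add: NA_ratio_def field_simps)

lemma ratio_bound_from_split:
  fixes q p \<theta> b m1 m2 \<delta> c a :: real
  assumes "q \<le> \<theta> * p + 2 * b" "\<theta> \<le> m2 / \<delta>" "b \<le> 2 * c * m1 * m2" "a * m1 \<le> p"
    and "p > 0" "a > 0" "c \<ge> 0" "m2 \<ge> 0"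
  shows "q / p \<le> (1 / \<delta> + 4 * c / a) * m2"
proof -
  have "4 * c * m2 * m1 \<le> 4 * c * m2 * (p / a)"
    using assms by (intro mult_left_mono) (simp_all add: field_simps)
  then have "2 * b \<le> 4 * c * m2 / a * p"
    using assms(3) by (simp add: mult_ac)
  moreover have "\<theta> * p \<le> m2 / \<delta> * p"
    using assms(2,5) by (intro mult_right_mono) auto
  ultimately have "q \<le> (1 / \<delta> + 4 * c / a) * m2 * p"
    using assms(1) by (simp add: algebra_simps)
  then show ?thesis
    using assms(5) by (simp add: divide_le_eq)
qed

locale singular_root =
  fixes f :: "'n::finite vec \<Rightarrow> 'n vec"
    and Df :: "'n vec \<Rightarrow> 'n vec \<Rightarrow>\<^sub>L 'n vec"
    and D2f :: "'n vec \<Rightarrow> 'n vec \<Rightarrow>\<^sub>L 'n vec \<Rightarrow>\<^sub>L 'n vec"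
    and xs :: "'n vec" and PN PR :: "'n vec \<Rightarrow> 'n vec" and rhat :: real
  assumes f_deriv: "(f has_derivative blinfun_apply (Df x)) (at x)"
    and Df_deriv: "(Df has_derivative blinfun_apply (D2f x)) (at x)"
    and D2f_cont: "continuous_on UNIV D2f"
    and root: "f xs = 0"
    and projN: "is_orth_proj PN (nullsp Df xs)"
    and projR: "is_orth_proj PR (rangesp Df xs)"
    and A: "assumptionA Df D2f xs PN rhat"
begin

abbreviation "N \<equiv> nullsp Df xs"

abbreviation "regular_ball \<equiv> ball xs rhat - sing_set Df"

abbreviation "Dhat_inv y \<equiv> inv_into N (Dhat D2f xs PN y)"

lemma linear_PN: "linear PN"
  using projN subspace_nullsp by (rule is_orth_proj_linear)

lemma linear_PR: "linear PR"
  using projR subspace_rangesp by (rule is_orth_proj_linear)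

lemma norm_Dhat_le: "norm (Dhat D2f xs PN y z) \<le> norm (D2f xs) * norm (y - xs) * norm z"
proof -
  have "norm (Dhat D2f xs PN y z) \<le> norm (D2f xs (y - xs) z)"
    unfolding Dhat_def using projN by (rule is_orth_proj_norm_le)
  also have "\<dots> \<le> norm (D2f xs (y - xs)) * norm z" by (rule norm_blinfun)
  also have "\<dots> \<le> norm (D2f xs) * norm (y - xs) * norm z"
    by (intro mult_right_mono norm_blinfun) simp
  finally show ?thesis .
qed

lemma
  assumes "y \<in> regular_ball" and "w \<in> N"
  shows Dhat_inv_in_null: "Dhat_inv y w \<in> N"
    and Dhat_Dhat_inv: "Dhat D2f xs PN y (Dhat_inv y w) = w"
proof -
  have "bij_betw (Dhat D2f xs PN y) N N" using A assms(1) by (simp add: assumptionA_def)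
  then have "w \<in> Dhat D2f xs PN y ` N" using assms(2) by (simp add: bij_betw_def)
  then show "Dhat_inv y w \<in> N" "Dhat D2f xs PN y (Dhat_inv y w) = w"
    by (rule inv_into_into, rule f_inv_into_f)
qed

lemma jac_inv_approx:
  obtains M where "M \<ge> 0"
    "\<And>y v. y \<in> regular_ball \<Longrightarrow>
       norm (matrix_inv (jac Df y) *v v - Dhat_inv y (PN v)) \<le> M * norm v"
proof -
  obtain M where M: "\<forall>y\<in>regular_ball. \<forall>v.
      norm (matrix_inv (jac Df y) *v v - Dhat_inv y (PN v)) \<le> M * norm v"
    using A by (auto simp: assumptionA_def)
  show thesis
  proof (rule that[of "max M 0"])
    show "norm (matrix_inv (jac Df y) *v v - Dhat_inv y (PN v)) \<le> max M 0 * norm v"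
      if "y \<in> regular_ball" for y v
      using M that by (meson max.cobounded1 mult_right_mono norm_ge_zero order_trans)
  qed simp
qed

lemma Df_lipschitz_on_cball:
  obtains L where "L > 0"
    "\<And>y z. y \<in> cball xs r \<Longrightarrow> z \<in> cball xs r \<Longrightarrow> norm (Df y - Df z) \<le> L * norm (y - z)"
proof -
  have "compact (D2f ` cball xs r)"
    using D2f_cont by (meson compact_cball compact_continuous_image continuous_on_subset subset_UNIV)
  then obtain L where "L > 0" "\<forall>y\<in>cball xs r. norm (D2f y) \<le> L"
    by (auto dest!: compact_imp_bounded simp: bounded_pos)
  with Df_deriv show thesis
    by (intro that derivative_lipschitz_on_convex[of "cball xs r" Df D2f])
      (auto intro: has_derivative_at_withinI)
qed

lemma newton_error_near_null:
  obtains c where "c \<ge> 0"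
    "\<And>y. y \<in> regular_ball \<Longrightarrow> \<exists>n\<in>N. norm (y - xs + newton_step f Df y - n) \<le> c * norm (y - xs) ^ 2"
proof -
  obtain M where M: "M \<ge> 0" "\<And>y v. y \<in> regular_ball \<Longrightarrow>
      norm (matrix_inv (jac Df y) *v v - Dhat_inv y (PN v)) \<le> M * norm v"
    using jac_inv_approx by blast
  obtain L where L: "L > 0" "\<And>y z. y \<in> cball xs rhat \<Longrightarrow> z \<in> cball xs rhat \<Longrightarrow>
      norm (Df y - Df z) \<le> L * norm (y - z)"
    using Df_lipschitz_on_cball by blast
  show thesis
  proof (rule that[of "M * L"])
    fix y assume y: "y \<in> regular_ball"
    define r where "r = Df y (y - xs) - f y"
    have "xs \<in> cball xs rhat" using y by (auto dest: le_less_trans[OF zero_le_dist])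
    then have "norm r \<le> L * norm (y - xs) ^ 2"
      unfolding r_def using y L f_deriv root
      by (intro linearization_error_at_zero[of "cball xs rhat"]) (auto intro: has_derivative_at_withinI)
    have "norm (y - xs + newton_step f Df y - Dhat_inv y (PN r)) \<le> M * norm r"
      using M(2)[OF y, of r] y by (simp add: r_def newton_error_eq)
    also have "\<dots> \<le> M * L * norm (y - xs) ^ 2"
      using \<open>norm r \<le> _\<close> M(1) by (simp add: mult.assoc mult_left_mono)
    finally have "norm (y - xs + newton_step f Df y - Dhat_inv y (PN r)) \<le> M * L * norm (y - xs) ^ 2" .
    moreover have "Dhat_inv y (PN r) \<in> N"
      using y projN by (intro Dhat_inv_in_null) (auto intro: is_orth_proj_in)
    ultimately show "\<exists>n\<in>N. norm (y - xs + newton_step f Df y - n) \<le> M * L * norm (y - xs) ^ 2"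
      by blast
  qed (use M L in simp)
qed

lemma norm_PN_Df_root_le:
  assumes M: "M \<ge> 0" "\<And>y v. y \<in> regular_ball \<Longrightarrow>
      norm (matrix_inv (jac Df y) *v v - Dhat_inv y (PN v)) \<le> M * norm v"
    and L: "L \<ge> 0" "\<And>y z. y \<in> cball xs rhat \<Longrightarrow> z \<in> cball xs rhat \<Longrightarrow>
      norm (Df y - Df z) \<le> L * norm (y - z)"
    and y: "y \<in> regular_ball"
  shows "norm (PN (Df xs u))
    \<le> (norm (D2f xs) * (1 + M * (norm (Df xs) + L * rhat)) + L) * norm (y - xs) * norm u"
proof -
  \<comment> \<open>Apply (A) to \<open>f'(y) u\<close>, whose preimage under \<open>f'(y)\<close> is \<open>u\<close>: this yields \<open>z \<in> N\<close> of size
    \<open>O(\<parallel>u\<parallel>)\<close> with \<open>Dhat(y) z = P\<^sub>N f'(y) u\<close>, and \<open>Dhat(y) = O(\<parallel>y - x\<^sup>*\<parallel>)\<close>.\<close>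
  define t where "t = norm (y - xs)"
  define z where "z = Dhat_inv y (PN (Df y u))"
  have t: "t < rhat" using y by (simp add: t_def dist_norm norm_minus_commute)
  then have lip: "norm (Df y - Df xs) \<le> L * t"
    using y L(2)[of y xs] norm_ge_zero[of "y - xs"] by (simp add: t_def)
  have "L * t \<le> L * rhat" using t L(1) by (simp add: mult_left_mono)
  then have "norm (Df y) \<le> norm (Df xs) + L * rhat"
    using norm_triangle_sub[of "Df y" "Df xs"] lip by linarith
  then have "norm (Df y u) \<le> (norm (Df xs) + L * rhat) * norm u"
    by (meson norm_blinfun norm_ge_zero mult_right_mono order_trans)
  moreover have "norm (u - z) \<le> M * norm (Df y u)"
    using M(2)[OF y, of "Df y u"] y by (simp add: z_def matrix_inv_jac_cancel)
  ultimately have "norm (u - z) \<le> M * ((norm (Df xs) + L * rhat) * norm u)"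
    using M(1) by (meson mult_left_mono order_trans)
  then have nz: "norm z \<le> (1 + M * (norm (Df xs) + L * rhat)) * norm u"
    using norm_triangle_sub[of z u] by (simp add: norm_minus_commute algebra_simps)
  have "PN (Df xs u) = Dhat D2f xs PN y z - PN ((Df y - Df xs) u)"
    using y projN
    by (simp add: z_def Dhat_Dhat_inv is_orth_proj_in blinfun.diff_left linear_diff[OF linear_PN])
  then have "norm (PN (Df xs u)) \<le> norm (Dhat D2f xs PN y z) + norm ((Df y - Df xs) u)"
    using norm_triangle_ineq4 is_orth_proj_norm_le[OF projN] by (metis add_left_mono order_trans)
  also have "\<dots> \<le> norm (D2f xs) * t * norm z + L * t * norm u"
  proof (rule add_mono)
    show "norm (Dhat D2f xs PN y z) \<le> norm (D2f xs) * t * norm z"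
      by (simp add: t_def norm_Dhat_le)
    show "norm ((Df y - Df xs) u) \<le> L * t * norm u"
      using norm_blinfun lip by (meson mult_right_mono norm_ge_zero order_trans)
  qed
  also have "\<dots> \<le> norm (D2f xs) * t * ((1 + M * (norm (Df xs) + L * rhat)) * norm u) + L * t * norm u"
    using nz by (intro add_mono[OF mult_left_mono order_refl]) (auto simp: t_def)
  also have "\<dots> = (norm (D2f xs) * (1 + M * (norm (Df xs) + L * rhat)) + L) * t * norm u"
    by (simp add: algebra_simps)
  finally show ?thesis by (simp add: t_def)
qed

lemma PN_Df_root_bound:
  obtains K where "K > 0"
    "\<And>y u. y \<in> regular_ball \<Longrightarrow> norm (PN (Df xs u)) \<le> K * norm (y - xs) * norm u"
proof -
  obtain M where M: "M \<ge> 0" "\<And>y v. y \<in> regular_ball \<Longrightarrow>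
      norm (matrix_inv (jac Df y) *v v - Dhat_inv y (PN v)) \<le> M * norm v"
    using jac_inv_approx by blast
  obtain L where L: "L > 0" "\<And>y z. y \<in> cball xs rhat \<Longrightarrow> z \<in> cball xs rhat \<Longrightarrow>
      norm (Df y - Df z) \<le> L * norm (y - z)"
    using Df_lipschitz_on_cball by blast
  define K where "K = norm (D2f xs) * (1 + M * (norm (Df xs) + L * rhat)) + L"
  show thesis
  proof (rule that[of "max K 1"])
    fix y u assume "y \<in> regular_ball"
    then have "norm (PN (Df xs u)) \<le> K * norm (y - xs) * norm u"
      unfolding K_def using M L(2) L(1) by (intro norm_PN_Df_root_le) auto
    also have "\<dots> \<le> max K 1 * norm (y - xs) * norm u" by (intro mult_right_mono) auto
    finally show "norm (PN (Df xs u)) \<le> max K 1 * norm (y - xs) * norm u" .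
  qed simp
qed

lemma PR_null_bound:
  obtains \<delta> where "\<delta> > 0"
    "\<And>y n. y \<in> regular_ball \<Longrightarrow> n \<in> N \<Longrightarrow> norm (PR n) \<le> min 1 (norm (y - xs) / \<delta>) * norm n"
proof (cases "\<forall>u. PN (Df xs u) = 0")
  \<comment> \<open>Then \<open>R \<bottom> N\<close>.\<close>
  case True
  then have "PR n = 0" if "n \<in> N" for n
    using True by (intro is_orth_proj_annihilate_sym[OF projN projR _ that]) (auto simp: rangesp_def)
  then show thesis by (intro that[of 1]) auto
next
  case False
  then obtain u where u: "PN (Df xs u) \<noteq> 0" by blast
  then have "u \<noteq> 0" using linear_0[OF linear_PN] by auto
  obtain K where K: "K > 0"
    "\<And>y u. y \<in> regular_ball \<Longrightarrow> norm (PN (Df xs u)) \<le> K * norm (y - xs) * norm u"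
    using PN_Df_root_bound by blast
  \<comment> \<open>No point of the regular ball is closer than \<open>\<delta>\<close> to \<open>x\<^sup>*\<close>.\<close>
  define \<delta> where "\<delta> = norm (PN (Df xs u)) / (K * norm u)"
  have \<delta>: "\<delta> > 0" using u \<open>u \<noteq> 0\<close> K(1) by (simp add: \<delta>_def)
  have "min 1 (norm (y - xs) / \<delta>) = 1" if "y \<in> regular_ball" for y
    using K(2)[OF that, of u] \<delta> \<open>u \<noteq> 0\<close> K(1)
    by (simp add: \<delta>_def field_simps)
  with \<delta> show thesis
    by (intro that[of \<delta>]) (simp_all add: is_orth_proj_norm_le[OF projR])
qed

lemma norm_PR_le:
  assumes "n \<in> N" "0 \<le> \<theta>" "\<theta> \<le> 1" "norm (PR n) \<le> \<theta> * norm n"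
  shows "norm (PR (n + b)) \<le> \<theta> * norm (PN (n + b)) + 2 * norm b"
proof -
  have n_eq: "PN (n + b) - PN b = n"
    using is_orth_proj_id[OF projN subspace_nullsp assms(1)] by (simp add: linear_add[OF linear_PN])
  have "norm (PN (n + b) - PN b) \<le> norm (PN (n + b)) + norm b"
    using norm_triangle_ineq4[of "PN (n + b)" "PN b"] is_orth_proj_norm_le[OF projN, of b] by linarith
  then have n_le: "norm n \<le> norm (PN (n + b)) + norm b"
    by (simp only: n_eq)
  have "norm (PR (n + b)) \<le> norm (PR n) + norm (PR b)"
    by (simp add: linear_add[OF linear_PR] norm_triangle_ineq)
  also have "\<dots> \<le> \<theta> * norm n + norm b"
    using assms(4) is_orth_proj_norm_le[OF projR] by (rule add_mono)
  also have "\<dots> \<le> \<theta> * (norm (PN (n + b)) + norm b) + norm b"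
    using n_le assms(2) by (simp add: mult_left_mono)
  also have "\<dots> \<le> \<theta> * norm (PN (n + b)) + 2 * norm b"
    using mult_left_le_one_le[OF norm_ge_zero assms(2,3), of b] by (simp add: algebra_simps)
  finally show ?thesis .
qed

lemma NA_error_near_null:
  assumes c: "c \<ge> 0"
      "\<And>y. y \<in> regular_ball \<Longrightarrow> \<exists>n\<in>N. norm (y - xs + newton_step f Df y - n) \<le> c * norm (y - xs) ^ 2"
    and x: "NA_seq f Df x" "k \<ge> 1" "x k \<in> regular_ball" "x (k-1) \<in> regular_ball"
  obtains n where "n \<in> N"
    "norm (x (k+1) - xs - n) \<le> 2 * c
       * max (\<bar>1 - NA_gamma f Df x k\<bar> * norm (x k - xs)) (\<bar>NA_gamma f Df x k\<bar> * norm (x (k-1) - xs))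
       * max (norm (x k - xs)) (norm (x (k-1) - xs))"
proof -
  obtain n1 where n1: "n1 \<in> N"
    and near1: "norm (x k - xs + newton_step f Df (x k) - n1) \<le> c * norm (x k - xs) ^ 2"
    using c(2)[OF x(3)] by blast
  obtain n2 where n2: "n2 \<in> N"
    and near2: "norm (x (k-1) - xs + newton_step f Df (x (k-1)) - n2) \<le> c * norm (x (k-1) - xs) ^ 2"
    using c(2)[OF x(4)] by blast
  note bound = norm_affine_comb_diff_le[OF near1 near2 c(1) norm_ge_zero norm_ge_zero, where g = "NA_gamma f Df x k"]
  show thesis
  proof (rule that)
    show "(1 - NA_gamma f Df x k) *\<^sub>R n1 + NA_gamma f Df x k *\<^sub>R n2 \<in> N"
      using subspace_nullsp n1 n2 by (intro subspace_add subspace_scale)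
  qed (unfold NA_seq_error[OF x(1,2)], rule bound)
qed

lemma NA_sigma_bound:
  assumes C: "C > 0" and \<rho>: "\<rho> \<noteq> 1"
  obtains K where "\<And>x k E. NA_seq f Df x \<Longrightarrow> k \<ge> 1 \<Longrightarrow>
      x k \<in> regular_ball \<Longrightarrow> x (k-1) \<in> regular_ball \<Longrightarrow>
      E \<noteq> 0 \<Longrightarrow> NA_ratio xs PN x k E = \<rho> \<Longrightarrow>
      norm E > C * max (\<bar>1 - NA_gamma f Df x k\<bar> * norm (x k - xs))
                       (\<bar>NA_gamma f Df x k\<bar> * norm (x (k-1) - xs)) \<Longrightarrow>
      PN (x (k+1) - xs) \<noteq> 0 \<and>
      norm (PR (x (k+1) - xs)) / norm (PN (x (k+1) - xs))
        \<le> K * max (norm (x k - xs)) (norm (x (k-1) - xs))"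
proof -
  obtain c where c: "c \<ge> 0"
    "\<And>y. y \<in> regular_ball \<Longrightarrow> \<exists>n\<in>N. norm (y - xs + newton_step f Df y - n) \<le> c * norm (y - xs) ^ 2"
    using newton_error_near_null by blast
  obtain \<delta> where \<delta>: "\<delta> > 0"
    "\<And>y n. y \<in> regular_ball \<Longrightarrow> n \<in> N \<Longrightarrow> norm (PR n) \<le> min 1 (norm (y - xs) / \<delta>) * norm n"
    using PR_null_bound by blast
  define a where "a = \<bar>1 - \<rho>\<bar> * C"
  have a: "a > 0" using C \<rho> by (simp add: a_def)
  show thesis
  proof (rule that[of "1 / \<delta> + 4 * c / a"])
    fix x k E
    let ?g = "NA_gamma f Df x k"
    define m1 where "m1 = max (\<bar>1 - ?g\<bar> * norm (x k - xs)) (\<bar>?g\<bar> * norm (x (k-1) - xs))"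
    define m2 where "m2 = max (norm (x k - xs)) (norm (x (k-1) - xs))"
    define \<theta> where "\<theta> = min 1 (norm (x k - xs) / \<delta>)"
    assume x: "NA_seq f Df x" "k \<ge> 1" "x k \<in> regular_ball" "x (k-1) \<in> regular_ball"
      and E: "E \<noteq> 0" "NA_ratio xs PN x k E = \<rho>" and E_big: "C * m1 < norm E"
    obtain n where n: "n \<in> N" and b: "norm (x (k+1) - xs - n) \<le> 2 * c * m1 * m2"
      using NA_error_near_null[OF c x] unfolding m1_def m2_def by blast
    define P where "P = PN (x (k+1) - xs)"
    have "a * m1 \<le> \<bar>1 - \<rho>\<bar> * norm E"
      using E_big by (simp add: a_def mult.assoc mult_left_mono)
    also have "\<dots> \<le> norm P"
      unfolding P_def using E(2,1) by (rule NA_ratio_lower_bound)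
    finally have P_big: "a * m1 \<le> norm P" .
    have "P \<noteq> 0"
      using \<rho> E(1) NA_ratio_lower_bound[OF E(2,1)] by (auto simp: P_def mult_le_0_iff)
    have "\<theta> \<le> m2 / \<delta>"
      unfolding \<theta>_def m2_def using \<delta>(1) by (intro min.coboundedI2 divide_right_mono) auto
    moreover have "norm (PR (x (k+1) - xs)) \<le> \<theta> * norm P + 2 * norm (x (k+1) - xs - n)"
      using norm_PR_le[OF n _ _ \<delta>(2)[OF x(3) n], of "x (k+1) - xs - n"] \<delta>(1)
      by (simp add: P_def \<theta>_def)
    moreover have "m2 \<ge> 0" by (simp add: m2_def le_max_iff_disj)
    ultimately have "norm (PR (x (k+1) - xs)) / norm P \<le> (1 / \<delta> + 4 * c / a) * m2"
      using b P_big \<open>P \<noteq> 0\<close> a c(1) by (intro ratio_bound_from_split) auto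
    with \<open>P \<noteq> 0\<close> show "P \<noteq> 0 \<and> norm (PR (x (k+1) - xs)) / norm P \<le> (1 / \<delta> + 4 * c / a) * m2"
      by blast
  qed
qed

end

theorem lemma5p7:
  fixes f :: "real^'n \<Rightarrow> real^'n"
    and Df :: "'n vec \<Rightarrow> 'n vec \<Rightarrow>\<^sub>L 'n vec"
    and D2f :: "'n vec \<Rightarrow> 'n vec \<Rightarrow>\<^sub>L 'n vec \<Rightarrow>\<^sub>L 'n vec"
    and D3f :: "'n vec \<Rightarrow> 'n vec \<Rightarrow>\<^sub>L 'n vec \<Rightarrow>\<^sub>L 'n vec \<Rightarrow>\<^sub>L 'n vec"
    and xs :: "real^'n" and PN PR :: "real^'n \<Rightarrow> real^'n" and rhat :: real
  assumes smooth: "C3 f Df D2f D3f"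
    and root: "f xs = 0"
    and N_nontriv: "nullsp Df xs \<noteq> {0}"
    and dsum: "nullsp Df xs \<inter> rangesp Df xs = {0}"
              "\<forall>v. \<exists>a\<in>nullsp Df xs. \<exists>b\<in>rangesp Df xs. v = a + b"
    and projN: "is_orth_proj PN (nullsp Df xs)"
    and projR: "is_orth_proj PR (rangesp Df xs)"
    and rhat_pos: "rhat > 0"
    and A: "assumptionA Df D2f xs PN rhat"
  shows "\<forall>C>0. \<forall>\<rho>. \<rho> \<noteq> 1 \<longrightarrow> (\<exists>K. \<forall>x k E.
      NA_seq f Df x \<and> k \<ge> 1 \<and>
      x k \<in> ball xs rhat - sing_set Df \<and> x (k-1) \<in> ball xs rhat - sing_set Df \<and>
      NA_w f Df x (k+1) \<noteq> NA_w f Df x k \<and>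
      E \<in> NA_Se f Df D2f xs PN PR x k \<and> E \<noteq> 0 \<and>
      (\<forall>E'\<in>NA_Se f Df D2f xs PN PR x k. E' \<noteq> 0 \<longrightarrow>
          NA_ratio xs PN x k E \<le> NA_ratio xs PN x k E') \<and>
      NA_ratio xs PN x k E = \<rho> \<and>
      norm E > C * max (\<bar>1 - NA_gamma f Df x k\<bar> * norm (x k - xs))
                       (\<bar>NA_gamma f Df x k\<bar> * norm (x (k-1) - xs))
      \<longrightarrow> PN (x (k+1) - xs) \<noteq> 0 \<and>
          norm (PR (x (k+1) - xs)) / norm (PN (x (k+1) - xs))
            \<le> K * max (norm (x k - xs)) (norm (x (k-1) - xs)))"
proof -
  interpret singular_root f Df D2f xs PN PR rhat
  proof
    show "(f has_derivative blinfun_apply (Df x)) (at x)"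
      and "(Df has_derivative blinfun_apply (D2f x)) (at x)" for x
      using smooth by (simp_all add: C3_def)
    show "continuous_on UNIV D2f"
      using smooth by (auto simp: C3_def intro!: continuous_at_imp_continuous_on has_derivative_continuous)
  qed (fact root projN projR A)+
  \<comment> \<open>Not needed: \<open>N \<noteq> {0}\<close>, the direct sum, \<open>rhat > 0\<close>, \<open>w\<^sub>k\<^sub>+\<^sub>1 \<noteq> w\<^sub>k\<close>, and that \<open>E\<close> minimises the
    ratio over \<open>S\<^sup>e\<^sub>k\<^sub>+\<^sub>1\<close>.\<close>
  show ?thesis
    by (intro allI impI, rule NA_sigma_bound, assumption+, intro exI allI impI, elim conjE) blast
qed

end
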